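(* Let $X$ be a metric space and $v\in X$ a point such that $\mathscr C(v)$ is finite, and let $A_v:=A(d_v)$. Then: (1) every $A\in\mathscr A(X)$ with $A\subset A_v$ satisfies $\mathrm{rk}(A)\le\frac12|\mathscr C(v)|$; (2) there are at most $2^{|\mathscr C(v)|-1}-1$ sets $A\in\mathscr A(X)$ with $A\subset A_v$ and $\mathrm{rk}(A)=1$.
   Context: $d_v=d(\cdot,v)$. $I(x,y)=\{u: d(x,u)+d(u,y)=d(x,y)\}$, $C(x,v)=\{y: v\in I(x,y)\}$, and $\mathscr C(v)=\{C(x,v): x\in X\}$. For $f\colon X\to\mathbb R$, $A(f)$ is the set of unordered pairs $\{x,y\}$ ($x=y$ allowed) with $f(x)+f(y)=d(x,y)$; $\Delta(X)=\{f: f(x)+f(y)\ge d(x,y)\ \forall x,y\}$; $\mathscr A(X)=\{A(f): f\in\Delta(X),\ \bigcup A(f)=X\}$; $\mathrm{rk}(A)=\dim\{g\in\mathbb R^X: g(x)+g(y)=d(x,y)\ \forall\{x,y\}\in A\}$. *)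

theory Defs
  imports "HOL-Analysis.Analysis" "HOL-Library.Function_Algebras"
begin

text \<open>The metric space X is the whole type 'a (class metric_space), d = dist.\<close>

definition dv :: "'a::metric_space \<Rightarrow> 'a \<Rightarrow> real" where
  "dv v = (\<lambda>x. dist x v)"

definition interval :: "'a::metric_space \<Rightarrow> 'a \<Rightarrow> 'a set" where
  "interval x y = {u. dist x u + dist u y = dist x y}"

definition Cone :: "'a::metric_space \<Rightarrow> 'a \<Rightarrow> 'a set" where
  "Cone x v = {y. v \<in> interval x y}"

definition Cones :: "'a::metric_space \<Rightarrow> 'a set set" where
  "Cones v = {Cone x v | x. True}"

text \<open>Unordered pairs {x,y} (x = y allowed) are represented as sets {x,y}.\<close>
definition Aset :: "('a::metric_space \<Rightarrow> real) \<Rightarrow> 'a set set" where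
  "Aset f = {{x, y} | x y. f x + f y = dist x y}"

definition Delta :: "('a::metric_space \<Rightarrow> real) set" where
  "Delta = {f. \<forall>x y. f x + f y \<ge> dist x y}"

definition AA :: "'a::metric_space set set set" where
  "AA = {Aset f | f. f \<in> Delta \<and> \<Union>(Aset f) = UNIV}"

definition Sol :: "'a::metric_space set set \<Rightarrow> ('a \<Rightarrow> real) set" where
  "Sol A = {g. \<forall>x y. {x, y} \<in> A \<longrightarrow> g x + g y = dist x y}"

text \<open>Dimension of the affine solution set = dimension of its direction space.\<close>
definition rk_space :: "'a::metric_space set set \<Rightarrow> ('a \<Rightarrow> real) set" where
  "rk_space A = {g - h | g h. g \<in> Sol A \<and> h \<in> Sol A}"

definition fscale :: "real \<Rightarrow> ('a \<Rightarrow> real) \<Rightarrow> ('a \<Rightarrow> real)" where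
  "fscale c f = (\<lambda>x. c * f x)"

lemma vector_space_fscale: "vector_space fscale"
  by unfold_locales (auto simp: fscale_def algebra_simps)

definition rk :: "'a::metric_space set set \<Rightarrow> nat" where
  "rk A = vector_space.dim fscale (rk_space A)"

end

theory Submission
  imports Defs
begin

text \<open>Let \<open>A = A(f)\<close> with \<open>A \<subseteq> A\<^sub>v\<close>. Whether a pair \<open>{x,y}\<close> is tight for \<open>f\<close> depends only
  on the cone \<open>C(x,v)\<close>, so every direction \<open>h\<close> of the solution space (\<open>h(x) + h(y) = 0\<close> on tight
  pairs) is constant on cones. Joining two cones when they contain a tight pair gives a graph on
  \<open>\<C>(v)\<close> without isolated vertices; it has a dominating set of at most \<open>|\<C>(v)|/2\<close> cones, and
  a direction is determined by its values there, which bounds the rank.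

  The defect \<open>f - d\<^sub>v\<close> is itself a direction, positive at \<open>v\<close> in rank one. Rank one then forces
  it to take only the values \<open>0, \<plusminus>f(v)\<close>, so \<open>A\<close> is determined by the set where \<open>f < d\<^sub>v\<close>, a
  nonempty union of cones avoiding \<open>C(v,v)\<close>: at most \<open>2\<^bsup>|\<C>(v)|-1\<^esup> - 1\<close> choices.\<close>

interpretation fun_vs: vector_space "fscale :: real \<Rightarrow> ('a \<Rightarrow> real) \<Rightarrow> 'a \<Rightarrow> real"
  by (rule vector_space_fscale)

lemma Aset_pair_iff: "{x, y} \<in> Aset f \<longleftrightarrow> f x + f y = dist x y"
  by (auto simp: Aset_def doubleton_eq_iff dist_commute add.commute)

lemma Aset_cover_partner:
  assumes "\<Union>(Aset f) = UNIV"
  shows "\<exists>y. f x + f y = dist x y"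
proof -
  have "x \<in> \<Union>(Aset f)" using assms by simp
  then obtain a b where "x \<in> {a, b}" "f a + f b = dist a b" unfolding Aset_def by blast
  then show ?thesis by (metis add.commute dist_commute insertE singletonD)
qed

lemma Cone_iff: "y \<in> Cone x v \<longleftrightarrow> dist x v + dist v y = dist x y"
  by (simp add: Cone_def interval_def)

definition dominates :: "'a set \<Rightarrow> ('a \<Rightarrow> 'a \<Rightarrow> bool) \<Rightarrow> 'a set \<Rightarrow> bool" where
  "dominates V E D \<longleftrightarrow> (\<forall>u\<in>V. u \<in> D \<or> (\<exists>w\<in>D. E u w) \<or> E u u)"

lemma dominates_complement_of_minimum:
  assumes no_isolated: "\<And>u. u \<in> V \<Longrightarrow> \<exists>w\<in>V. E u w"
    and sym: "\<And>u w. E u w \<Longrightarrow> E w u"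
    and "finite V" "D \<subseteq> V" "dominates V E D"
    and minimum: "\<And>D'. D' \<subseteq> V \<Longrightarrow> dominates V E D' \<Longrightarrow> card D \<le> card D'"
  shows "dominates V E (V - D)"
  unfolding dominates_def
proof (intro ballI, rule ccontr)
  fix u assume "u \<in> V" and "\<not> (u \<in> V - D \<or> (\<exists>w\<in>V - D. E u w) \<or> E u u)"
  then have u: "u \<in> D" "\<not> E u u" "\<And>w. w \<in> V - D \<Longrightarrow> \<not> E u w" by auto
  have "dominates V E (D - {u})"
    unfolding dominates_def
  proof
    fix z assume z: "z \<in> V"
    show "z \<in> D - {u} \<or> (\<exists>w\<in>D - {u}. E z w) \<or> E z z"
    proof (cases "z = u")
      case True
      then show ?thesis using no_isolated[OF \<open>u \<in> V\<close>] u by fastforce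
    next
      case False
      then show ?thesis
        using \<open>dominates V E D\<close> z u(3) sym unfolding dominates_def by fastforce
    qed
  qed
  then have "card D \<le> card (D - {u})" using minimum \<open>D \<subseteq> V\<close> by blast
  moreover have "card (D - {u}) < card D"
    using u(1) \<open>finite V\<close> \<open>D \<subseteq> V\<close> by (meson card_Diff1_less finite_subset)
  ultimately show False by simp
qed

lemma dominating_set_half:
  assumes "finite V"
    and "\<And>u. u \<in> V \<Longrightarrow> \<exists>w\<in>V. E u w"
    and "\<And>u w. E u w \<Longrightarrow> E w u"
  obtains T where "T \<subseteq> V" "2 * card T \<le> card V" "dominates V E T"
proof -
  have "dominates V E V" by (simp add: dominates_def)
  then obtain D where D: "D \<subseteq> V" "dominates V E D"
    and minimum: "\<And>D'. D' \<subseteq> V \<Longrightarrow> dominates V E D' \<Longrightarrow> card D \<le> card D'"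
    using ex_has_least_nat[of "\<lambda>D. D \<subseteq> V \<and> dominates V E D" V card] by blast
  have "dominates V E (V - D)"
    using dominates_complement_of_minimum assms D minimum by blast
  moreover have "card D + card (V - D) = card V"
    using D(1) \<open>finite V\<close> by (metis card_Diff_subset card_mono finite_subset le_add_diff_inverse)
  ultimately show ?thesis
    using that[of D] that[of "V - D"] D by (cases "card D \<le> card (V - D)") auto
qed

lemma fibrewise_in_span_indicators:
  fixes h :: "'a \<Rightarrow> real" and cls :: "'a \<Rightarrow> 'b"
  assumes "finite T"
    and const: "\<And>x y. cls x = cls y \<Longrightarrow> h x = h y"
    and outside: "\<And>x. cls x \<notin> T \<Longrightarrow> h x = 0"
  shows "h \<in> fun_vs.span ((\<lambda>C. indicator (cls -` {C})) ` T)"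
proof -
  define rep where "rep C = (SOME x. cls x = C)" for C
  have "h = (\<Sum>C\<in>T. fscale (h (rep C)) (indicator (cls -` {C})))"
  proof
    fix x
    have "(\<Sum>C\<in>T. fscale (h (rep C)) (indicator (cls -` {C}))) x
        = (\<Sum>C\<in>T. if cls x = C then h (rep C) else 0)"
      by (induction T rule: infinite_finite_induct) (auto simp: fscale_def indicator_def)
    also have "\<dots> = h x"
      using \<open>finite T\<close> outside const[of "rep (cls x)" x] someI[of "\<lambda>y. cls y = cls x" x]
      by (auto simp: rep_def)
    finally show "h x = (\<Sum>C\<in>T. fscale (h (rep C)) (indicator (cls -` {C}))) x" ..
  qed
  also have "\<dots> \<in> fun_vs.span ((\<lambda>C. indicator (cls -` {C})) ` T)"
    by (intro fun_vs.span_sum fun_vs.span_scale fun_vs.span_base) auto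
  finally show ?thesis .
qed

lemma dim_le_card_if_determined_on:
  fixes K :: "('a \<Rightarrow> real) set" and cls :: "'a \<Rightarrow> 'b"
  assumes "fun_vs.subspace K" "finite T"
    and const: "\<And>h x y. h \<in> K \<Longrightarrow> cls x = cls y \<Longrightarrow> h x = h y"
    and determined: "\<And>h. h \<in> K \<Longrightarrow> (\<And>x. cls x \<in> T \<Longrightarrow> h x = 0) \<Longrightarrow> h = 0"
  shows "fun_vs.dim K \<le> card T"
proof -
  define r where "r h = (\<lambda>x. if cls x \<in> T then h x else 0)" for h :: "'a \<Rightarrow> real"
  have r_linear: "module_hom fscale fscale r"
    using fun_vs.module_axioms
    by (auto simp: module_hom_def module_hom_axioms_def r_def fscale_def fun_eq_iff)
  have "inj_on r K"
  proof (rule inj_onI)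
    fix h1 h2 assume h: "h1 \<in> K" "h2 \<in> K" and "r h1 = r h2"
    then have "(h1 - h2) x = 0" if "cls x \<in> T" for x
      using fun_cong[OF \<open>r h1 = r h2\<close>, of x] that unfolding r_def by simp
    then have "h1 - h2 = 0" using determined fun_vs.subspace_diff[OF \<open>fun_vs.subspace K\<close> h] by blast
    then show "h1 = h2" by simp
  qed
  obtain B where B: "B \<subseteq> K" "fun_vs.independent B" "K \<subseteq> fun_vs.span B" "card B = fun_vs.dim K"
    using fun_vs.basis_exists by blast
  have "fun_vs.span B = K"
    using fun_vs.span_minimal[OF B(1) \<open>fun_vs.subspace K\<close>] B(3) by blast
  then have "fun_vs.independent (r ` B)"
    using module_hom.dependent_inj_imageD[OF r_linear] \<open>inj_on r K\<close> B(2) by metis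
  moreover have "r ` B \<subseteq> fun_vs.span ((\<lambda>C. indicator (cls -` {C})) ` T)"
    using B(1) \<open>finite T\<close> const
    by (auto intro!: fibrewise_in_span_indicators simp: r_def)
  ultimately have "card (r ` B) \<le> card ((\<lambda>C. indicator (cls -` {C}) :: 'a \<Rightarrow> real) ` T)"
    using fun_vs.independent_span_bound \<open>finite T\<close> by blast
  also have "\<dots> \<le> card T" using \<open>finite T\<close> card_image_le by blast
  finally show ?thesis
    using B(4) card_image[OF inj_on_subset[OF \<open>inj_on r K\<close> B(1)]] by simp
qed

lemma dim_one_eq_if_eq_at:
  fixes K :: "('a \<Rightarrow> real) set"
  assumes "fun_vs.dim K = 1" "h1 \<in> K" "h2 \<in> K" "h1 x = h2 x" "h1 x \<noteq> 0"
  shows "h1 = h2"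
proof -
  obtain B where "K \<subseteq> fun_vs.span B" "card B = 1"
    using fun_vs.basis_exists[of K] assms(1) by metis
  then obtain b where "K \<subseteq> range (\<lambda>c. fscale c b)"
    by (metis card_1_singletonE fun_vs.span_singleton)
  then obtain c1 c2 where "h1 = fscale c1 b" "h2 = fscale c2 b"
    using assms(2,3) by blast
  with assms(4,5) show ?thesis by (auto simp: fscale_def)
qed

text \<open>Rank-one solutions have the shape \<open>f = d\<^sub>v + f(v) \<cdot> sign_pattern v Q\<close> with \<open>Q\<close> the set where
  \<open>f < d\<^sub>v\<close>, and then \<open>A(f) = cone_pairs v Q\<close>.\<close>
definition sign_pattern :: "'a::metric_space \<Rightarrow> 'a set \<Rightarrow> 'a \<Rightarrow> real" where
  "sign_pattern v Q x = (if x \<in> Q then -1 else if \<exists>q\<in>Q. x \<in> Cone q v then 1 else 0)"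

definition cone_pairs :: "'a::metric_space \<Rightarrow> 'a set \<Rightarrow> 'a set set" where
  "cone_pairs v Q = {{x, y} | x y. y \<in> Cone x v \<and> sign_pattern v Q x + sign_pattern v Q y = 0}"

locale sub_Av =
  fixes v :: "'a::metric_space" and f :: "'a \<Rightarrow> real"
  assumes f_Delta: "f \<in> Delta"
    and f_cover: "\<Union>(Aset f) = UNIV"
    and Aset_sub_Av: "Aset f \<subseteq> Aset (dv v)"
begin

definition tight :: "'a \<Rightarrow> 'a \<Rightarrow> bool" where
  "tight x y \<longleftrightarrow> f x + f y = dist x y"

definition directions :: "('a \<Rightarrow> real) set" where
  "directions = {h. \<forall>x y. tight x y \<longrightarrow> h x + h y = 0}"

lemma dist_le_f_add: "dist x y \<le> f x + f y"
  using f_Delta by (auto simp: Delta_def)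

lemma tight_sym: "tight x y \<Longrightarrow> tight y x"
  unfolding tight_def by (metis add.commute dist_commute)

lemma tight_partner: "\<exists>y. tight x y"
  using Aset_cover_partner[OF f_cover] by (simp add: tight_def)

lemma tight_Cone: "tight x y \<Longrightarrow> y \<in> Cone x v"
  using Aset_sub_Av Aset_pair_iff[of x y f] Aset_pair_iff[of x y "dv v"]
  by (auto simp: tight_def dv_def Cone_iff dist_commute)

text \<open>A tight partner \<open>y'\<close> of \<open>x'\<close> lies in \<open>C(x',v) = C(x,v)\<close>; adding the inequalities of
  \<open>\<Delta>(X)\<close> for the crossed pairs \<open>{x',y}\<close> and \<open>{x,y'}\<close> forces both to be equalities.\<close>
lemma tight_Cone_eq:
  assumes "Cone x v = Cone x' v" "tight x y"
  shows "tight x' y"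
proof -
  obtain y' where "tight x' y'" using tight_partner by blast
  have "y \<in> Cone x' v" "y' \<in> Cone x v"
    using tight_Cone[OF \<open>tight x y\<close>] tight_Cone[OF \<open>tight x' y'\<close>] assms(1) by auto
  with assms(2) \<open>tight x' y'\<close> tight_Cone[OF \<open>tight x y\<close>] tight_Cone[OF \<open>tight x' y'\<close>]
    dist_le_f_add[of x' y] dist_le_f_add[of x y']
  show ?thesis by (simp add: tight_def Cone_iff)
qed

lemma rk_space_Aset: "rk_space (Aset f) = directions"
proof
  show "rk_space (Aset f) \<subseteq> directions"
    by (auto simp: rk_space_def directions_def Sol_def Aset_pair_iff tight_def algebra_simps)
next
  show "directions \<subseteq> rk_space (Aset f)"
  proof
    fix h assume "h \<in> directions"
    then have "f + h \<in> Sol (Aset f)" "f \<in> Sol (Aset f)"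
      by (auto simp: Sol_def Aset_pair_iff directions_def tight_def algebra_simps)
    moreover have "h = (f + h) - f" by simp
    ultimately show "h \<in> rk_space (Aset f)" unfolding rk_space_def by blast
  qed
qed

lemma subspace_directions: "fun_vs.subspace directions"
  unfolding fun_vs.subspace_def directions_def
  by (auto simp: fscale_def algebra_simps) (metis distrib_left mult_zero_right)

lemma directions_Cone_eq:
  assumes "h \<in> directions" "Cone x v = Cone x' v"
  shows "h x = h x'"
proof -
  obtain y where "tight x y" using tight_partner by blast
  moreover have "tight x' y" using tight_Cone_eq assms(2) calculation by blast
  ultimately have "h x + h y = 0" "h x' + h y = 0" using assms(1) by (auto simp: directions_def)
  then show ?thesis by simp
qed

lemma directions_subset_span:
  assumes "finite (Cones v)"
  shows "directions \<subseteq> fun_vs.span ((\<lambda>C. indicator ((\<lambda>x. Cone x v) -` {C})) ` Cones v)"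
  using assms directions_Cone_eq by (auto intro!: fibrewise_in_span_indicators simp: Cones_def)

definition cone_adjacent :: "'a set \<Rightarrow> 'a set \<Rightarrow> bool" where
  "cone_adjacent C C' \<longleftrightarrow> (\<exists>x y. C = Cone x v \<and> C' = Cone y v \<and> tight x y)"

lemma directions_eq_0_if_vanish_on_dominating:
  assumes "dominates (Cones v) cone_adjacent T" "h \<in> directions"
    and zero: "\<And>x. Cone x v \<in> T \<Longrightarrow> h x = 0"
  shows "h = 0"
proof
  fix x
  have tight_zero: "h x1 + h y1 = 0" if "tight x1 y1" for x1 y1
    using assms(2) that by (simp add: directions_def)
  have "Cone x v \<in> T \<or> (\<exists>C\<in>T. cone_adjacent (Cone x v) C) \<or> cone_adjacent (Cone x v) (Cone x v)"
    using assms(1) unfolding dominates_def Cones_def by blast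
  then show "h x = 0 x"
  proof (elim disjE bexE)
    fix C assume "C \<in> T" "cone_adjacent (Cone x v) C"
    then obtain x1 y1 where "Cone x v = Cone x1 v" "Cone y1 v \<in> T" "tight x1 y1"
      unfolding cone_adjacent_def by blast
    then show ?thesis using zero tight_zero directions_Cone_eq[OF assms(2), of x x1] by force
  next
    assume "cone_adjacent (Cone x v) (Cone x v)"
    then obtain x1 y1 where "Cone x v = Cone x1 v" "Cone x v = Cone y1 v" "tight x1 y1"
      unfolding cone_adjacent_def by blast
    then show ?thesis
      using tight_zero directions_Cone_eq[OF assms(2), of x x1] directions_Cone_eq[OF assms(2), of x y1]
      by force
  qed (simp add: zero)
qed

lemma dim_directions_le:
  assumes "finite (Cones v)"
  shows "2 * fun_vs.dim directions \<le> card (Cones v)"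
proof -
  have "\<exists>C'\<in>Cones v. cone_adjacent C C'" if "C \<in> Cones v" for C
    using that tight_partner unfolding Cones_def cone_adjacent_def by blast
  moreover have "cone_adjacent C' C" if "cone_adjacent C C'" for C C'
    using that tight_sym unfolding cone_adjacent_def by blast
  ultimately obtain T where
    T: "T \<subseteq> Cones v" "2 * card T \<le> card (Cones v)" "dominates (Cones v) cone_adjacent T"
    using dominating_set_half[OF assms] by metis
  then have "fun_vs.dim directions \<le> card T"
    using dim_le_card_if_determined_on[OF subspace_directions, of T "\<lambda>x. Cone x v"]
      directions_Cone_eq directions_eq_0_if_vanish_on_dominating finite_subset[OF T(1) assms]
    by blast
  with T(2) show ?thesis by linarith
qed

definition defect :: "'a \<Rightarrow> real" where
  "defect x = f x - dist x v"

definition below_dv :: "'a set" where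
  "below_dv = {x. f x < dist x v}"

lemma tight_iff_defect: "tight x y \<longleftrightarrow> y \<in> Cone x v \<and> defect x + defect y = 0"
  using tight_Cone[of x y] by (auto simp: tight_def defect_def Cone_iff dist_commute)

lemma defect_directions: "defect \<in> directions"
  using tight_iff_defect by (simp add: directions_def)

lemma f_nonneg_at_v: "0 \<le> f v"
  using dist_le_f_add[of v v] by simp

lemma v_notin_below_dv: "v \<notin> below_dv"
  using f_nonneg_at_v by (simp add: below_dv_def)

lemma below_dv_Cone_eq: "Cone x v = Cone x' v \<Longrightarrow> x \<in> below_dv \<Longrightarrow> x' \<in> below_dv"
  using directions_Cone_eq[OF defect_directions, of x x'] by (simp add: below_dv_def defect_def)

text \<open>If \<open>f(v) = 0\<close> then \<open>f \<ge> d\<^sub>v\<close>, so the defect vanishes and every \<open>{x,v}\<close> is tight,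
  which leaves only the zero direction.\<close>
lemma f_pos_at_v_if_dim_one:
  assumes "fun_vs.dim directions = 1"
  shows "0 < f v"
proof (rule ccontr)
  assume "\<not> 0 < f v"
  then have fv: "f v = 0" using f_nonneg_at_v by simp
  have defect_zero: "defect x = 0" for x
  proof -
    obtain y where "tight x y" using tight_partner by blast
    moreover have "0 \<le> defect z" for z
      using dist_le_f_add[of z v] fv by (simp add: defect_def)
    ultimately show ?thesis using tight_iff_defect[of x y] by (metis add_nonneg_eq_0_iff)
  qed
  have "tight x v" for x
    using defect_zero[of x] fv by (simp add: tight_def defect_def)
  then have "h = 0" if "h \<in> directions" for h
  proof -
    have sum_zero: "h x + h v = 0" for x using that \<open>tight x v\<close> by (simp add: directions_def)
    have "h x = 0" for x using sum_zero[of x] sum_zero[of v] by linarith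
    then show ?thesis by auto
  qed
  then have "directions \<subseteq> fun_vs.span {}" by auto
  then show False using assms fun_vs.dim_le_card[of directions "{}"] by simp
qed

text \<open>Truncating the defect to its values of modulus \<open>f(v)\<close> gives another direction agreeing with it
  at \<open>v\<close>; in rank one the two coincide.\<close>
lemma defect_values:
  assumes "fun_vs.dim directions = 1"
  shows "defect x = 0 \<or> \<bar>defect x\<bar> = f v"
proof -
  define trunc where "trunc x = (if \<bar>defect x\<bar> = f v then defect x else 0)" for x
  have "trunc \<in> directions"
  proof -
    have "\<bar>defect x\<bar> = \<bar>defect y\<bar>" if "tight x y" for x y
      using defect_directions that by (simp add: directions_def eq_neg_iff_add_eq_0[symmetric])
    then show ?thesis using defect_directions by (auto simp: directions_def trunc_def)
  qed
  moreover have "trunc v = defect v" "defect v \<noteq> 0"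
    using f_pos_at_v_if_dim_one[OF assms] by (auto simp: trunc_def defect_def)
  ultimately have "trunc = defect"
    using dim_one_eq_if_eq_at[OF assms _ defect_directions, of trunc v] by simp
  then have "trunc x = defect x" by simp
  then show ?thesis by (auto simp: trunc_def split: if_splits)
qed

lemma defect_eq_sign_pattern:
  assumes "fun_vs.dim directions = 1"
  shows "defect x = f v * sign_pattern v below_dv x"
proof -
  have three_values: "defect z = 0 \<or> defect z = f v \<or> defect z = - f v" for z
    using defect_values[OF assms, of z] by linarith
  have pos: "0 < f v" by (rule f_pos_at_v_if_dim_one[OF assms])
  have below: "z \<in> below_dv \<longleftrightarrow> defect z = - f v" for z
    using three_values[of z] pos by (auto simp: below_dv_def defect_def)
  have "defect x = f v \<longleftrightarrow> (\<exists>q\<in>below_dv. x \<in> Cone q v)"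
  proof
    assume "defect x = f v"
    obtain y where "tight y x" using tight_partner tight_sym by blast
    then show "\<exists>q\<in>below_dv. x \<in> Cone q v"
      using \<open>defect x = f v\<close> below[of y] by (auto simp: tight_iff_defect)
  next
    assume "\<exists>q\<in>below_dv. x \<in> Cone q v"
    then obtain q where "defect q = - f v" "dist q v + dist v x = dist q x"
      using below by (auto simp: Cone_iff)
    then have "f v \<le> defect x"
      using dist_le_f_add[of q x] by (simp add: defect_def dist_commute)
    then show "defect x = f v" using three_values[of x] pos by auto
  qed
  then show ?thesis using below[of x] three_values[of x] pos by (auto simp: sign_pattern_def)
qed

lemma Aset_eq_cone_pairs:
  assumes "fun_vs.dim directions = 1"
  shows "Aset f = cone_pairs v below_dv"
proof -
  have "tight x y \<longleftrightarrow> y \<in> Cone x v \<and> sign_pattern v below_dv x + sign_pattern v below_dv y = 0"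
    for x y
  proof -
    have "defect x + defect y = f v * (sign_pattern v below_dv x + sign_pattern v below_dv y)"
      using defect_eq_sign_pattern[OF assms] by (simp add: distrib_left)
    then show ?thesis using tight_iff_defect[of x y] f_pos_at_v_if_dim_one[OF assms] by simp
  qed
  then show ?thesis by (simp add: Aset_def cone_pairs_def tight_def)
qed

lemma below_dv_nonempty:
  assumes "fun_vs.dim directions = 1"
  shows "below_dv \<noteq> {}"
proof -
  obtain y where "tight v y" using tight_partner by blast
  then have "defect y < 0"
    using f_pos_at_v_if_dim_one[OF assms] by (simp add: tight_iff_defect defect_def)
  then show ?thesis by (auto simp: below_dv_def defect_def)
qed

end

lemma sub_Av_of_AA:
  assumes "A \<in> AA" "A \<subseteq> Aset (dv v)"
  obtains f where "sub_Av v f" "A = Aset f"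
  using assms unfolding AA_def by (auto intro: sub_Av.intro)

lemma rk_sub_Av_le:
  assumes "finite (Cones v)" "A \<in> AA" "A \<subseteq> Aset (dv v)"
  shows "rk_space A \<subseteq> fun_vs.span ((\<lambda>C. indicator ((\<lambda>x. Cone x v) -` {C})) ` Cones v)"
    and "2 * rk A \<le> card (Cones v)"
proof -
  obtain f where "sub_Av v f" "A = Aset f" using sub_Av_of_AA assms(2,3) .
  then interpret sub_Av v f by simp
  show "rk_space A \<subseteq> fun_vs.span ((\<lambda>C. indicator ((\<lambda>x. Cone x v) -` {C})) ` Cones v)"
    using directions_subset_span[OF assms(1)] rk_space_Aset \<open>A = Aset f\<close> by simp
  show "2 * rk A \<le> card (Cones v)"
    using dim_directions_le[OF assms(1)] rk_space_Aset \<open>A = Aset f\<close> by (simp add: rk_def)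
qed

lemma rk_one_sub_Av_cone_pairs:
  assumes "A \<in> AA" "A \<subseteq> Aset (dv v)" "rk A = 1"
  shows "A \<in> (\<lambda>S. cone_pairs v {x. Cone x v \<in> S}) ` (Pow (Cones v - {Cone v v}) - {{}})"
proof -
  obtain f where "sub_Av v f" "A = Aset f" using sub_Av_of_AA assms(1,2) .
  then interpret sub_Av v f by simp
  have dim: "fun_vs.dim directions = 1"
    using assms(3) rk_space_Aset \<open>A = Aset f\<close> by (simp add: rk_def)
  define S where "S = (\<lambda>x. Cone x v) ` below_dv"
  have "below_dv = {x. Cone x v \<in> S}"
    using below_dv_Cone_eq unfolding S_def by blast
  moreover have "S \<in> Pow (Cones v - {Cone v v}) - {{}}"
  proof -
    have "Cone v v \<notin> S"
      using v_notin_below_dv below_dv_Cone_eq unfolding S_def by blast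
    moreover have "S \<subseteq> Cones v" unfolding S_def Cones_def by blast
    ultimately show ?thesis using below_dv_nonempty[OF dim] unfolding S_def by blast
  qed
  ultimately show ?thesis
    using Aset_eq_cone_pairs[OF dim] \<open>A = Aset f\<close> by (intro image_eqI[where x = S]) simp_all
qed

theorem proposition5p6:
  fixes v :: "'a::metric_space"
  assumes "finite (Cones v)"
  shows "(\<forall>A \<in> AA. A \<subseteq> Aset (dv v) \<longrightarrow>
            (\<exists>B. finite B \<and> rk_space A \<subseteq> module.span fscale B) \<and> 2 * rk A \<le> card (Cones v))
       \<and> finite {A \<in> AA. A \<subseteq> Aset (dv v) \<and> rk A = 1}
       \<and> card {A \<in> AA. A \<subseteq> Aset (dv v) \<and> rk A = 1} \<le> 2 ^ (card (Cones v) - 1) - 1"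
proof -
  define \<S> where "\<S> = Pow (Cones v - {Cone v v}) - {{}}"
  have rank_one_sub: "{A \<in> AA. A \<subseteq> Aset (dv v) \<and> rk A = 1}
      \<subseteq> (\<lambda>S. cone_pairs v {x. Cone x v \<in> S}) ` \<S>"
    using rk_one_sub_Av_cone_pairs unfolding \<S>_def by blast
  have "Cone v v \<in> Cones v" by (auto simp: Cones_def)
  then have "finite \<S>" and card_\<S>: "card \<S> = 2 ^ (card (Cones v) - 1) - 1"
    using assms by (simp_all add: \<S>_def card_Diff_singleton card_Pow)
  moreover have "finite {A \<in> AA. A \<subseteq> Aset (dv v) \<and> rk A = 1}"
    using finite_subset[OF rank_one_sub finite_imageI[OF \<open>finite \<S>\<close>]] .
  moreover have "card {A \<in> AA. A \<subseteq> Aset (dv v) \<and> rk A = 1} \<le> card \<S>"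
    using card_mono[OF finite_imageI[OF \<open>finite \<S>\<close>] rank_one_sub]
      card_image_le[OF \<open>finite \<S>\<close>, of "\<lambda>S. cone_pairs v {x. Cone x v \<in> S}"]
    by linarith
  moreover have "\<exists>B. finite B \<and> rk_space A \<subseteq> module.span fscale B"
    and "2 * rk A \<le> card (Cones v)" if "A \<in> AA" "A \<subseteq> Aset (dv v)" for A
    using rk_sub_Av_le[OF assms that] assms by blast+
  ultimately show ?thesis using card_\<S> by auto
qed

end
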